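(* Let $G=(V,E,w)$, $s$, $\tau$ (with $|\tau|\ge 2$) and a budget $b\ge 0$ be as in the context, and suppose that at least one feasible subgraph exists. Then among the maximizers of $\textsc{CD}_{\tau,s}(S)$ over all feasible subgraphs $S\subseteq G$, there is at least one that is a directed acyclic graph.
   Context: Let $G=(V,E,w)$ be a finite directed graph with non-negative edge weights $w:E\to\mathbb{R}_{\ge 0}$. A path from $u$ to $v$ in a subgraph $S\subseteq G$ is a sequence $u=v_0\to v_1\to\cdots\to v_k=v$ ($k\ge 0$) with each $v_i\to v_{i+1}$ an edge of $S$; for $i\le j$, $w_P(v_i,v_j)=\sum_{m=i}^{j-1} w(v_m\to v_{m+1})$. A vertex $y$ is reachable from $x$ in $S$ if there is a path from $x$ to $y$ in $S$ (a vertex is reachable from itself). Fix a start vertex $s\in V$ and a finite target set $\tau\subseteq V\setminus\{s\}$ with $|\tau|\ge 2$. The cost of a subgraph $S$ is $w(S)=\sum_{e\in E(S)} w(e)$. For a subgraph $S$ containing $s$ and $\tau$ in which every target is reachable from $s$: for a path $P=v_0\to\cdots\to v_k$ in $S$ with $v_0=s$, $v_k=t\in\tau$, let $\ell$ be the largest index such that some target in $\tau\setminus\{t\}$ is reachable from $v_\ell$ in $S$; the last deceptive point is $l(P,t)=v_\ell$. The unique distance of $t\in\tau$ is $\textsc{U}_S(t)=\min\{w_P(l(P,t),t): P \text{ a path in } S \text{ from } s \text{ to } t\}$, and the counterdeceptiveness of $S$ is $\textsc{CD}_{\tau,s}(S)=\min_{t\in\tau}\textsc{U}_S(t)$. Given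 a budget $b\ge 0$, a subgraph $S\subseteq G$ is feasible if $s\in V(S)$, $\tau\subseteq V(S)$, every target is reachable from $s$ in $S$, and $w(S)\le b$. A maximizer is a feasible $S$ maximizing $\textsc{CD}_{\tau,s}(S)$ among feasible subgraphs. *)

theory Defs
  imports Complex_Main
begin

text \<open>Directed graphs are given by a vertex set V and an edge set E of ordered pairs;
a subgraph S is a pair (VS, ES) of a vertex set and an edge set.\<close>

type_synonym 'a sgraph = "'a set \<times> ('a \<times> 'a) set"

definition is_path :: "'a sgraph \<Rightarrow> 'a list \<Rightarrow> 'a \<Rightarrow> 'a \<Rightarrow> bool" where
  "is_path S xs u v \<longleftrightarrow> xs \<noteq> [] \<and> hd xs = u \<and> last xs = v \<and> set xs \<subseteq> fst S \<and>
     (\<forall>i. Suc i < length xs \<longrightarrow> (xs ! i, xs ! Suc i) \<in> snd S)"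

definition reachable :: "'a sgraph \<Rightarrow> 'a \<Rightarrow> 'a \<Rightarrow> bool" where
  "reachable S x y \<longleftrightarrow> (\<exists>xs. is_path S xs x y)"

definition path_weight :: "('a \<times> 'a \<Rightarrow> real) \<Rightarrow> 'a list \<Rightarrow> nat \<Rightarrow> nat \<Rightarrow> real" where
  "path_weight w xs i j = (\<Sum>m\<in>{i..<j}. w (xs ! m, xs ! Suc m))"

definition last_deceptive_idx :: "'a sgraph \<Rightarrow> 'a set \<Rightarrow> 'a list \<Rightarrow> 'a \<Rightarrow> nat" where
  "last_deceptive_idx S \<tau> xs t =
     (GREATEST l. l < length xs \<and> (\<exists>t'\<in>\<tau> - {t}. reachable S (xs ! l) t'))"

definition unique_dist :: "('a \<times> 'a \<Rightarrow> real) \<Rightarrow> 'a sgraph \<Rightarrow> 'a \<Rightarrow> 'a set \<Rightarrow> 'a \<Rightarrow> real" where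
  "unique_dist w S s \<tau> t =
     Inf {path_weight w xs (last_deceptive_idx S \<tau> xs t) (length xs - 1) | xs. is_path S xs s t}"

definition counterdeceptiveness :: "('a \<times> 'a \<Rightarrow> real) \<Rightarrow> 'a set \<Rightarrow> 'a \<Rightarrow> 'a sgraph \<Rightarrow> real" where
  "counterdeceptiveness w \<tau> s S = Min (unique_dist w S s \<tau> ` \<tau>)"

definition cost :: "('a \<times> 'a \<Rightarrow> real) \<Rightarrow> 'a sgraph \<Rightarrow> real" where
  "cost w S = (\<Sum>e\<in>snd S. w e)"

definition feasible ::
  "'a set \<Rightarrow> ('a \<times> 'a) set \<Rightarrow> ('a \<times> 'a \<Rightarrow> real) \<Rightarrow> 'a \<Rightarrow> 'a set \<Rightarrow> real \<Rightarrow> 'a sgraph \<Rightarrow> bool" where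
  "feasible V E w s \<tau> b S \<longleftrightarrow>
     fst S \<subseteq> V \<and> snd S \<subseteq> E \<and> snd S \<subseteq> fst S \<times> fst S \<and>
     s \<in> fst S \<and> \<tau> \<subseteq> fst S \<and> (\<forall>t\<in>\<tau>. reachable S s t) \<and> cost w S \<le> b"

end

theory Submission
  imports Defs
begin

text \<open>A maximizer exists because a finite graph has only finitely many subgraphs. Given a
maximizer S, keep only the edges of S along which the hop distance from s grows by exactly
one. The result is acyclic, since hop distance strictly increases along its edges, still
reaches every vertex that S reaches, and costs no more. Deleting edges removes s-t paths
and can only move the last deceptive point of a remaining path earlier; with non-negative
weights this cannot decrease any unique distance, so the counterdeceptiveness does not drop
and the acyclic subgraph is again a maximizer.\<close>

lemma is_path_mono:
  "is_path S xs u v \<Longrightarrow> fst S \<subseteq> fst T \<Longrightarrow> snd S \<subseteq> snd T \<Longrightarrow> is_path T xs u v"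
  unfolding is_path_def by (auto 0 3)

lemma reachable_mono:
  "reachable S u v \<Longrightarrow> fst S \<subseteq> fst T \<Longrightarrow> snd S \<subseteq> snd T \<Longrightarrow> reachable T u v"
  unfolding reachable_def using is_path_mono by metis

lemma is_path_snoc:
  assumes "is_path S xs u v" and "(v, x) \<in> snd S" and "x \<in> fst S"
  shows "is_path S (xs @ [x]) u x"
proof -
  have "xs \<noteq> []" and "last xs = v" using assms(1) unfolding is_path_def by auto
  then have "xs ! (length xs - 1) = v" by (simp add: last_conv_nth)
  have "((xs @ [x]) ! i, (xs @ [x]) ! Suc i) \<in> snd S"
    if "Suc i < length (xs @ [x])" for i
  proof (cases "Suc i < length xs")
    case True
    then show ?thesis using assms(1) unfolding is_path_def by (simp add: nth_append)
  next
    case False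
    then have "i = length xs - 1" using that by simp
    then show ?thesis using \<open>xs ! (length xs - 1) = v\<close> \<open>xs \<noteq> []\<close> assms(2)
      by (simp add: nth_append)
  qed
  then show ?thesis using assms unfolding is_path_def by auto
qed

lemma is_path_take:
  assumes "is_path S xs u v" and "0 < k" and "k \<le> length xs"
  shows "is_path S (take k xs) u (xs ! (k - 1))"
  using assms unfolding is_path_def
  by (auto simp: hd_take last_conv_nth dest: in_set_takeD)

lemma is_path_weight_nonneg:
  assumes "is_path S xs u v" and "\<forall>e\<in>snd S. 0 \<le> w e" and "Suc m < length xs"
  shows "0 \<le> w (xs ! m, xs ! Suc m)"
  using assms unfolding is_path_def by blast

lemma path_weight_nonneg:
  "(\<And>m. m < n \<Longrightarrow> 0 \<le> w (xs ! m, xs ! Suc m)) \<Longrightarrow> 0 \<le> path_weight w xs i n"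
  unfolding path_weight_def by (auto intro: sum_nonneg)

lemma path_weight_antimono:
  assumes "i \<le> j" and "\<And>m. m < n \<Longrightarrow> 0 \<le> w (xs ! m, xs ! Suc m)"
  shows "path_weight w xs j n \<le> path_weight w xs i n"
  unfolding path_weight_def using assms by (intro sum_mono2) auto

lemma last_deceptive_idx_mono:
  assumes "fst T \<subseteq> fst S" and "snd T \<subseteq> snd S"
    and "\<exists>l<length xs. \<exists>t'\<in>\<tau> - {t}. reachable T (xs ! l) t'"
  shows "last_deceptive_idx T \<tau> xs t \<le> last_deceptive_idx S \<tau> xs t"
proof -
  define P where "P G l \<longleftrightarrow> l < length xs \<and> (\<exists>t'\<in>\<tau> - {t}. reachable G (xs ! l) t')" for G l
  have bounded: "\<And>G l. P G l \<Longrightarrow> l \<le> length xs" unfolding P_def by simp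
  obtain l where "P T l" using assms(3) unfolding P_def by blast
  then have "P T (Greatest (P T))" using bounded by (rule GreatestI_nat)
  then have "P S (Greatest (P T))"
    unfolding P_def using reachable_mono[OF _ assms(1,2)] by blast
  then have "Greatest (P T) \<le> Greatest (P S)" using bounded by (rule Greatest_le_nat)
  then show ?thesis unfolding last_deceptive_idx_def P_def .
qed

text \<open>The decoy hypothesis makes the last deceptive point of every s-t path in T well
defined; without it GREATEST is unspecified.\<close>

lemma unique_dist_antimono:
  assumes sub: "fst T \<subseteq> fst S" "snd T \<subseteq> snd S" and nonneg: "\<forall>e\<in>snd S. 0 \<le> w e"
    and "reachable T s t" and decoy: "\<exists>t'\<in>\<tau> - {t}. reachable T s t'"
  shows "unique_dist w S s \<tau> t \<le> unique_dist w T s \<tau> t"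
proof -
  let ?U = "\<lambda>G. {path_weight w xs (last_deceptive_idx G \<tau> xs t) (length xs - 1)
                   | xs. is_path G xs s t}"
  have "?U T \<noteq> {}" using \<open>reachable T s t\<close> unfolding reachable_def by blast
  moreover have "bdd_below (?U S)"
  proof (rule bdd_belowI)
    fix a assume "a \<in> ?U S"
    then obtain xs where xs: "is_path S xs s t"
      and a: "a = path_weight w xs (last_deceptive_idx S \<tau> xs t) (length xs - 1)" by blast
    show "0 \<le> a"
      unfolding a using is_path_weight_nonneg[OF xs nonneg] by (intro path_weight_nonneg) simp
  qed
  moreover have "\<exists>a\<in>?U S. a \<le> u" if "u \<in> ?U T" for u
  proof -
    obtain xs where xs: "is_path T xs s t"
      and u: "u = path_weight w xs (last_deceptive_idx T \<tau> xs t) (length xs - 1)"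
      using \<open>u \<in> ?U T\<close> by blast
    have xs_S: "is_path S xs s t" using is_path_mono[OF xs sub] .
    have "xs \<noteq> []" "xs ! 0 = s" using xs unfolding is_path_def by (auto simp: hd_conv_nth)
    then have "last_deceptive_idx T \<tau> xs t \<le> last_deceptive_idx S \<tau> xs t"
      using decoy by (intro last_deceptive_idx_mono[OF sub]) auto
    then have "path_weight w xs (last_deceptive_idx S \<tau> xs t) (length xs - 1) \<le> u"
      unfolding u using is_path_weight_nonneg[OF xs_S nonneg]
      by (intro path_weight_antimono) auto
    then show ?thesis using xs_S by blast
  qed
  ultimately show ?thesis unfolding unique_dist_def by (rule cInf_mono)
qed

lemma counterdeceptiveness_antimono:
  assumes "fst T \<subseteq> fst S" and "snd T \<subseteq> snd S" and "\<forall>e\<in>snd S. 0 \<le> w e"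
    and "finite \<tau>" and "2 \<le> card \<tau>" and reach: "\<forall>t\<in>\<tau>. reachable T s t"
  shows "counterdeceptiveness w \<tau> s S \<le> counterdeceptiveness w \<tau> s T"
proof -
  have decoy: "\<exists>t'\<in>\<tau> - {t}. reachable T s t'" for t
  proof -
    have "\<not> \<tau> \<subseteq> {t}" using \<open>2 \<le> card \<tau>\<close> card_mono[of "{t}" \<tau>] by auto
    then show ?thesis using reach by blast
  qed
  have "\<tau> \<noteq> {}" using \<open>2 \<le> card \<tau>\<close> by auto
  moreover have "counterdeceptiveness w \<tau> s S \<le> unique_dist w T s \<tau> t" if "t \<in> \<tau>" for t
  proof -
    have "counterdeceptiveness w \<tau> s S \<le> unique_dist w S s \<tau> t"
      unfolding counterdeceptiveness_def using \<open>finite \<tau>\<close> that by simp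
    also have "\<dots> \<le> unique_dist w T s \<tau> t"
      using assms(1-3) reach that decoy by (intro unique_dist_antimono) auto
    finally show ?thesis .
  qed
  ultimately show ?thesis unfolding counterdeceptiveness_def using \<open>finite \<tau>\<close> by simp
qed

definition hop_dist :: "'a sgraph \<Rightarrow> 'a \<Rightarrow> 'a \<Rightarrow> nat" where
  "hop_dist S s v = (LEAST n. \<exists>xs. is_path S xs s v \<and> length xs = Suc n)"

definition shortest_path_subgraph :: "'a sgraph \<Rightarrow> 'a \<Rightarrow> 'a sgraph" where
  "shortest_path_subgraph S s =
     (fst S, {(u, v) \<in> snd S. reachable S s u \<and> hop_dist S s v = Suc (hop_dist S s u)})"

lemma hop_dist_le:
  "is_path S xs s v \<Longrightarrow> length xs = Suc n \<Longrightarrow> hop_dist S s v \<le> n"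
  unfolding hop_dist_def by (rule Least_le) blast

lemma hop_dist_path:
  assumes "reachable S s v"
  obtains xs where "is_path S xs s v" and "length xs = Suc (hop_dist S s v)"
proof -
  obtain xs where "is_path S xs s v" using assms unfolding reachable_def by blast
  moreover have "xs \<noteq> []" using \<open>is_path S xs s v\<close> unfolding is_path_def by simp
  ultimately have "\<exists>n xs. is_path S xs s v \<and> length xs = Suc n"
    by (intro exI[of _ "length xs - 1"] exI[of _ xs]) simp
  then have "\<exists>xs. is_path S xs s v \<and> length xs = Suc (hop_dist S s v)"
    unfolding hop_dist_def by (rule LeastI_ex)
  then show ?thesis using that by blast
qed

lemma hop_dist_edge:
  assumes "reachable S s u" and "(u, v) \<in> snd S" and "v \<in> fst S"
  shows "hop_dist S s v \<le> Suc (hop_dist S s u)"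
proof -
  obtain xs where xs: "is_path S xs s u" "length xs = Suc (hop_dist S s u)"
    using hop_dist_path[OF assms(1)] .
  show ?thesis by (rule hop_dist_le[OF is_path_snoc[OF xs(1) assms(2,3)]]) (simp add: xs(2))
qed

lemma hop_dist_predecessor:
  assumes "reachable S s v" and "hop_dist S s v = Suc m"
  obtains u where "reachable S s u" and "(u, v) \<in> snd S" and "hop_dist S s u = m"
proof -
  obtain xs where xs: "is_path S xs s v" "length xs = Suc (Suc m)"
    using hop_dist_path[OF assms(1)] assms(2) by metis
  define u where "u = xs ! m"
  have prefix: "is_path S (take (Suc m) xs) s u"
    using is_path_take[OF xs(1), of "Suc m"] xs(2) unfolding u_def by simp
  then have "reachable S s u" unfolding reachable_def by blast
  moreover have "(u, v) \<in> snd S" and "v \<in> fst S"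
    using xs unfolding is_path_def u_def by (auto simp: last_conv_nth)
  moreover have "hop_dist S s u \<le> m" using hop_dist_le[OF prefix] xs(2) by simp
  moreover have "m \<le> hop_dist S s u"
    using hop_dist_edge[OF \<open>reachable S s u\<close> \<open>(u, v) \<in> snd S\<close> \<open>v \<in> fst S\<close>] assms(2) by simp
  ultimately show ?thesis by (intro that) auto
qed

lemma shortest_path_subgraph_subgraph:
  "fst (shortest_path_subgraph S s) = fst S" "snd (shortest_path_subgraph S s) \<subseteq> snd S"
  unfolding shortest_path_subgraph_def by auto

lemma reachable_shortest_path_subgraph:
  assumes "s \<in> fst S" and "reachable S s v"
  shows "reachable (shortest_path_subgraph S s) s v"
  using assms(2)
proof (induction "hop_dist S s v" arbitrary: v)
  case 0
  then obtain xs where "is_path S xs s v" "length xs = 1"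
    using hop_dist_path[OF \<open>reachable S s v\<close>] by auto
  then have "v = s" unfolding is_path_def by (cases xs) auto
  then show ?case using assms(1)
    unfolding reachable_def is_path_def shortest_path_subgraph_def by (intro exI[of _ "[s]"]) auto
next
  case (Suc m)
  obtain u where u: "reachable S s u" "(u, v) \<in> snd S" "hop_dist S s u = m"
    using hop_dist_predecessor[OF Suc.prems Suc.hyps(2)[symmetric]] .
  then obtain xs where "is_path (shortest_path_subgraph S s) xs s u"
    using Suc.hyps(1) unfolding reachable_def by metis
  moreover have "v \<in> fst S" and "(u, v) \<in> snd (shortest_path_subgraph S s)"
    using Suc u unfolding reachable_def is_path_def shortest_path_subgraph_def by auto
  ultimately show ?case
    using is_path_snoc unfolding reachable_def shortest_path_subgraph_def by fastforce
qed

lemma acyclic_shortest_path_subgraph: "acyclic (snd (shortest_path_subgraph S s))"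
proof -
  have "hop_dist S s x < hop_dist S s y"
    if "(x, y) \<in> (snd (shortest_path_subgraph S s))\<^sup>+" for x y
    using that by induction (auto simp: shortest_path_subgraph_def)
  then show ?thesis unfolding acyclic_def by blast
qed

lemma feasible_shortest_path_subgraph:
  assumes "feasible V E w s \<tau> b S" and "finite E" and "\<forall>e\<in>E. 0 \<le> w e"
  shows "feasible V E w s \<tau> b (shortest_path_subgraph S s)"
proof -
  let ?T = "shortest_path_subgraph S s"
  have "snd S \<subseteq> E" using assms(1) unfolding feasible_def by simp
  have "cost w ?T \<le> cost w S"
    unfolding cost_def
  proof (rule sum_mono2[OF finite_subset[OF \<open>snd S \<subseteq> E\<close> assms(2)]])
    show "snd ?T \<subseteq> snd S" by (rule shortest_path_subgraph_subgraph)
    show "0 \<le> w e" if "e \<in> snd S - snd ?T" for e using that \<open>snd S \<subseteq> E\<close> assms(3) by blast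
  qed
  moreover have "\<forall>t\<in>\<tau>. reachable ?T s t"
    using assms(1) unfolding feasible_def by (auto intro: reachable_shortest_path_subgraph)
  ultimately show ?thesis
    using assms(1) shortest_path_subgraph_subgraph[of S s] unfolding feasible_def by auto
qed

lemma finite_feasible:
  assumes "finite V" and "E \<subseteq> V \<times> V"
  shows "finite {S. feasible V E w s \<tau> b S}"
proof -
  have "{S. feasible V E w s \<tau> b S} \<subseteq> Pow V \<times> Pow E" unfolding feasible_def by auto
  then show ?thesis using assms by (meson finite_Pow_iff finite_SigmaI finite_subset)
qed

theorem lemma1:
  fixes V :: "'a set" and E :: "('a \<times> 'a) set" and w :: "'a \<times> 'a \<Rightarrow> real"
    and s :: 'a and \<tau> :: "'a set" and b :: real
  assumes "finite V" and "E \<subseteq> V \<times> V" and "\<forall>e\<in>E. w e \<ge> 0"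
    and "s \<in> V" and "\<tau> \<subseteq> V - {s}" and "card \<tau> \<ge> 2" and "b \<ge> 0"
    and "\<exists>S. feasible V E w s \<tau> b S"
  shows "\<exists>S. feasible V E w s \<tau> b S \<and>
           (\<forall>S'. feasible V E w s \<tau> b S' \<longrightarrow>
              counterdeceptiveness w \<tau> s S' \<le> counterdeceptiveness w \<tau> s S) \<and>
           acyclic (snd S)"
proof -
  let ?F = "{S. feasible V E w s \<tau> b S}" and ?cd = "counterdeceptiveness w \<tau> s"
  have "finite ?F" and "?F \<noteq> {}" using finite_feasible[OF assms(1,2)] assms(8) by auto
  then have "Max (?cd ` ?F) \<in> ?cd ` ?F" by simp
  then obtain S where S: "feasible V E w s \<tau> b S" and "?cd S = Max (?cd ` ?F)" by auto
  then have S_max: "?cd S' \<le> ?cd S" if "feasible V E w s \<tau> b S'" for S'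
    using \<open>finite ?F\<close> that by simp
  let ?T = "shortest_path_subgraph S s"
  have "finite E" using finite_subset[OF assms(2)] assms(1) by simp
  then have T: "feasible V E w s \<tau> b ?T"
    using feasible_shortest_path_subgraph[OF S] assms(3) by simp
  have "\<tau> \<subseteq> V" using assms(5) by blast
  then have "finite \<tau>" using assms(1) by (rule finite_subset)
  moreover have "\<forall>e\<in>snd S. 0 \<le> w e" using S assms(3) unfolding feasible_def by blast
  moreover have "\<forall>t\<in>\<tau>. reachable ?T s t" using T unfolding feasible_def by simp
  ultimately have "?cd S \<le> ?cd ?T"
    using shortest_path_subgraph_subgraph[of S s] assms(6)
    by (intro counterdeceptiveness_antimono) simp_all
  then have "?cd S' \<le> ?cd ?T" if "feasible V E w s \<tau> b S'" for S'
    using S_max[OF that] by linarith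
  then show ?thesis using T acyclic_shortest_path_subgraph[of S s] by (intro exI[of _ ?T]) simp
qed

end
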